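(* Let $1\le i\le n-1$ and $m\ge1$ be an integer, with the convention that $X^{(k)}=0$ for $k<0$. Then in ${\boldsymbol U}_{v}(\mathfrak q_n)$ (in fact in ${\boldsymbol U}_{v,\mathcal Z}$): \begin{align*} (1)\ &\mathsf E_{\bar i}\mathsf F_i^{(m)}=\mathsf F_i^{(m)}\mathsf E_{\bar i}-v^{1-m}\mathsf F_i^{(m-1)}\mathsf K_i\mathsf K_{\overline{i+1}}+v^{m-1}\mathsf F_i^{(m-1)}\mathsf K_{\bar i}\mathsf K_{i+1}-\mathsf F_i^{(m-2)}\mathsf K_i\mathsf K_{i+1}\mathsf F_{\bar i};\\ (2)\ &\mathsf E_i^{(m)}\mathsf F_{\bar i}=\mathsf F_{\bar i}\mathsf E_i^{(m)}+v^{m-1}\mathsf E_i^{(m-1)}\mathsf K_{\bar i}\mathsf K_{i+1}^{-1}-v^{-m+1}\mathsf E_i^{(m-1)}\mathsf K_{\overline{i+1}}\mathsf K_i^{-1}+\mathsf E_i^{(m-2)}\mathsf E_{\bar i}\mathsf K_{i+1}^{-1}\mathsf K_i^{-1};\\ (3)\ &\mathsf E_{\bar i}\mathsf E_{i+1}^{(m)}=v^m\mathsf E_{i+1}^{(m)}\mathsf E_{\bar i}+\mathsf E_{i+1}^{(m-1)}(\mathsf E_i\mathsf E_{\overline{i+1}}-v\mathsf E_{\overline{i+1}}\mathsf E_i)\quad(\text{here } i\le n-2). \end{align*}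
   Context: Let $v$ be an indeterminate. The quantum queer superalgebra ${\boldsymbol U}_{v}(\mathfrak q_n)$ is the associative superalgebra over $\mathbb Q(v)$ generated by even generators $\mathsf K_i,\mathsf K_i^{-1}$ ($1\le i\le n$), $\mathsf E_j,\mathsf F_j$ ($1\le j\le n-1$) and odd generators $\mathsf K_{\bar i}$ ($1\le i\le n$), $\mathsf E_{\bar j},\mathsf F_{\bar j}$ ($1\le j\le n-1$), subject to the following relations (indices are taken only where they make sense), where $(\epsilon_i,\alpha_j)=\delta_{i,j}-\delta_{i,j+1}$: (QQ1) $\mathsf K_i\mathsf K_i^{-1}=\mathsf K_i^{-1}\mathsf K_i=1$, $\mathsf K_i\mathsf K_j=\mathsf K_j\mathsf K_i$, $\mathsf K_i\mathsf K_{\bar j}=\mathsf K_{\bar j}\mathsf K_i$, $\mathsf K_{\bar i}\mathsf K_{\bar j}+\mathsf K_{\bar j}\mathsf K_{\bar i}=2\delta_{i,j}\frac{\mathsf K_i^2-\mathsf K_i^{-2}}{v^2-v^{-2}}$. (QQ2) $\mathsf K_i\mathsf E_j=v^{(\epsilon_i,\alpha_j)}\mathsf E_j\mathsf K_i$, $\mathsf K_i\mathsf E_{\bar j}=v^{(\epsilon_i,\alpha_j)}\mathsf E_{\bar j}\mathsf K_i$, $\mathsf K_i\mathsf F_j=v^{-(\epsilon_i,\alpha_j)}\mathsf F_j\mathsf K_i$, $\mathsf K_i\mathsf F_{\bar j}=v^{-(\epsilon_i,\alpha_j)}\mathsf F_{\bar j}\mathsf K_i$. (QQ3) $\mathsf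 K_{\bar i}\mathsf E_i-v\mathsf E_i\mathsf K_{\bar i}=\mathsf E_{\bar i}\mathsf K_i^{-1}$, $v\mathsf K_{\bar i}\mathsf E_{i-1}-\mathsf E_{i-1}\mathsf K_{\bar i}=-\mathsf K_i^{-1}\mathsf E_{\overline{i-1}}$, $\mathsf K_{\bar i}\mathsf F_i-v\mathsf F_i\mathsf K_{\bar i}=-\mathsf F_{\bar i}\mathsf K_i$, $v\mathsf K_{\bar i}\mathsf F_{i-1}-\mathsf F_{i-1}\mathsf K_{\bar i}=\mathsf K_i\mathsf F_{\overline{i-1}}$, $\mathsf K_{\bar i}\mathsf E_{\bar i}+v\mathsf E_{\bar i}\mathsf K_{\bar i}=\mathsf E_i\mathsf K_i^{-1}$, $v\mathsf K_{\bar i}\mathsf E_{\overline{i-1}}+\mathsf E_{\overline{i-1}}\mathsf K_{\bar i}=\mathsf K_i^{-1}\mathsf E_{i-1}$, $\mathsf K_{\bar i}\mathsf F_{\bar i}+v\mathsf F_{\bar i}\mathsf K_{\bar i}=\mathsf F_i\mathsf K_i$, $v\mathsf K_{\bar i}\mathsf F_{\overline{i-1}}+\mathsf F_{\overline{i-1}}\mathsf K_{\bar i}=\mathsf K_i\mathsf F_{i-1}$, and for $j\ne i,i-1$: $\mathsf K_{\bar i}\mathsf E_j=\mathsf E_j\mathsf K_{\bar i}$, $\mathsf K_{\bar i}\mathsf F_j=\mathsf F_j\mathsf K_{\bar i}$, $\mathsf K_{\bar i}\mathsf E_{\bar j}=-\mathsf E_{\bar j}\mathsf K_{\bar i}$,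 $\mathsf K_{\bar i}\mathsf F_{\bar j}=-\mathsf F_{\bar j}\mathsf K_{\bar i}$. (QQ4) $\mathsf E_i\mathsf F_j-\mathsf F_j\mathsf E_i=\delta_{i,j}\frac{\mathsf K_i\mathsf K_{i+1}^{-1}-\mathsf K_i^{-1}\mathsf K_{i+1}}{v-v^{-1}}$, $\mathsf E_{\bar i}\mathsf F_{\bar j}+\mathsf F_{\bar j}\mathsf E_{\bar i}=\delta_{i,j}\big(\frac{\mathsf K_i\mathsf K_{i+1}-\mathsf K_i^{-1}\mathsf K_{i+1}^{-1}}{v-v^{-1}}+(v-v^{-1})\mathsf K_{\bar i}\mathsf K_{\overline{i+1}}\big)$, $\mathsf E_i\mathsf F_{\bar j}-\mathsf F_{\bar j}\mathsf E_i=\delta_{i,j}(\mathsf K_{i+1}^{-1}\mathsf K_{\bar i}-\mathsf K_{\overline{i+1}}\mathsf K_i^{-1})$, $\mathsf E_{\bar i}\mathsf F_j-\mathsf F_j\mathsf E_{\bar i}=\delta_{i,j}(\mathsf K_{i+1}\mathsf K_{\bar i}-\mathsf K_{\overline{i+1}}\mathsf K_i)$. (QQ5) $\mathsf E_{\bar i}^2=-\frac{v-v^{-1}}{v+v^{-1}}\mathsf E_i^2$, $\mathsf F_{\bar i}^2=\frac{v-v^{-1}}{v+v^{-1}}\mathsf F_i^2$; for $|i-j|\ne1$: $\mathsf E_i\mathsf E_{\bar j}=\mathsf E_{\bar j}\mathsf E_i$, $\mathsf F_i\mathsf F_{\bar j}=\mathsf F_{\bar j}\mathsf F_i$; for $|i-j|>1$: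 $\mathsf E_i\mathsf E_j=\mathsf E_j\mathsf E_i$, $\mathsf F_i\mathsf F_j=\mathsf F_j\mathsf F_i$, $\mathsf E_{\bar i}\mathsf E_{\bar j}=-\mathsf E_{\bar j}\mathsf E_{\bar i}$, $\mathsf F_{\bar i}\mathsf F_{\bar j}=-\mathsf F_{\bar j}\mathsf F_{\bar i}$; $\mathsf E_i\mathsf E_{i+1}-v\mathsf E_{i+1}\mathsf E_i=\mathsf E_{\bar i}\mathsf E_{\overline{i+1}}+v\mathsf E_{\overline{i+1}}\mathsf E_{\bar i}$, $\mathsf E_i\mathsf E_{\overline{i+1}}-v\mathsf E_{\overline{i+1}}\mathsf E_i=\mathsf E_{\bar i}\mathsf E_{i+1}-v\mathsf E_{i+1}\mathsf E_{\bar i}$, $\mathsf F_i\mathsf F_{i+1}-v\mathsf F_{i+1}\mathsf F_i=-(\mathsf F_{\bar i}\mathsf F_{\overline{i+1}}+v\mathsf F_{\overline{i+1}}\mathsf F_{\bar i})$, $\mathsf F_i\mathsf F_{\overline{i+1}}-v\mathsf F_{\overline{i+1}}\mathsf F_i=\mathsf F_{\bar i}\mathsf F_{i+1}-v\mathsf F_{i+1}\mathsf F_{\bar i}$. (QQ6) for $|i-j|=1$: $\mathsf E_i^2X-(v+v^{-1})\mathsf E_iX\mathsf E_i+X\mathsf E_i^2=0$ for $X\in\{\mathsf E_j,\mathsf E_{\bar j}\}$ and $\mathsf F_i^2Y-(v+v^{-1})\mathsf F_iY\mathsf F_i+Y\mathsf F_i^2=0$ for $Y\in\{\mathsf F_j,\mathsf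 F_{\bar j}\}$. Notation: $[m]_v=\frac{v^m-v^{-m}}{v-v^{-1}}$, $[m]_v^!=[m]_v[m-1]_v\cdots[1]_v$, $[0]_v^!=1$, and $X^{(m)}=X^m/[m]_v^!$ for $m\ge0$. ${\boldsymbol U}_{v,\mathcal Z}$ denotes the $\mathbb Z[v,v^{-1}]$-subsuperalgebra of ${\boldsymbol U}_{v}(\mathfrak q_n)$ generated by $\mathsf K_i^{\pm1}$, $\prod_{s=1}^t\frac{\mathsf K_iv^{1-s}-\mathsf K_i^{-1}v^{s-1}}{v^s-v^{-s}}$, $\mathsf K_{\bar i}$, $\mathsf E_j^{(m)},\mathsf F_j^{(m)},\mathsf E_{\bar j},\mathsf F_{\bar j}$. *)

theory Defs
  imports "HOL-Computational_Algebra.Polynomial" "HOL-Computational_Algebra.Fraction_Field"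
begin

type_synonym qv = "rat poly fract"

definition vq :: qv where "vq = Fract [:0, 1:] 1"

definition qint :: "nat \<Rightarrow> qv" where
  "qint m = (vq ^ m - inverse vq ^ m) / (vq - inverse vq)"

definition qfact :: "nat \<Rightarrow> qv" where
  "qfact m = (\<Prod>k=1..m. qint k)"

text \<open>(epsilon_i, alpha_j) = delta_{i,j} - delta_{i,j+1}\<close>
definition epal :: "nat \<Rightarrow> nat \<Rightarrow> int" where
  "epal i j = (if i = j then 1 else 0) - (if i = j + 1 then 1 else 0)"

definition qv_algebra :: "(qv \<Rightarrow> 'a::ring_1) \<Rightarrow> bool" where
  "qv_algebra sc \<longleftrightarrow> sc 1 = 1 \<and> (\<forall>x y. sc (x + y) = sc x + sc y)
     \<and> (\<forall>x y. sc (x * y) = sc x * sc y) \<and> (\<forall>x a. sc x * a = a * sc x)"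

definition dpow :: "(qv \<Rightarrow> 'a::ring_1) \<Rightarrow> 'a \<Rightarrow> int \<Rightarrow> 'a" where
  "dpow sc X k = (if k < 0 then 0 else sc (inverse (qfact (nat k))) * X ^ nat k)"

text \<open>The defining relations (QQ1)-(QQ6) of U_v(q_n) for elements
  K i, Ki i (= K_i^{-1}), Kb i (= K_{bar i}), E j, F j, Eb j, Fb j of a Q(v)-algebra.\<close>
definition qq_rels :: "nat \<Rightarrow> (qv \<Rightarrow> 'a::ring_1) \<Rightarrow> (nat \<Rightarrow> 'a) \<Rightarrow> (nat \<Rightarrow> 'a) \<Rightarrow> (nat \<Rightarrow> 'a)
   \<Rightarrow> (nat \<Rightarrow> 'a) \<Rightarrow> (nat \<Rightarrow> 'a) \<Rightarrow> (nat \<Rightarrow> 'a) \<Rightarrow> (nat \<Rightarrow> 'a) \<Rightarrow> bool" where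
  "qq_rels n sc K Ki Kb E F Eb Fb \<longleftrightarrow>
   \<comment> \<open>QQ1\<close>
   (\<forall>i\<in>{1..n}. K i * Ki i = 1 \<and> Ki i * K i = 1) \<and>
   (\<forall>i\<in>{1..n}. \<forall>j\<in>{1..n}. K i * K j = K j * K i \<and> K i * Kb j = Kb j * K i \<and>
      Kb i * Kb j + Kb j * Kb i =
        (if i = j then sc (2 / (vq ^ 2 - inverse vq ^ 2)) * (K i ^ 2 - Ki i ^ 2) else 0)) \<and>
   \<comment> \<open>QQ2\<close>
   (\<forall>i\<in>{1..n}. \<forall>j\<in>{1..n-1}.
      K i * E j = sc (vq powi epal i j) * E j * K i \<and>
      K i * Eb j = sc (vq powi epal i j) * Eb j * K i \<and>
      K i * F j = sc (vq powi (- epal i j)) * F j * K i \<and>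
      K i * Fb j = sc (vq powi (- epal i j)) * Fb j * K i) \<and>
   \<comment> \<open>QQ3\<close>
   (\<forall>i\<in>{1..n-1}.
      Kb i * E i - sc vq * E i * Kb i = Eb i * Ki i \<and>
      Kb i * F i - sc vq * F i * Kb i = - (Fb i * K i) \<and>
      Kb i * Eb i + sc vq * Eb i * Kb i = E i * Ki i \<and>
      Kb i * Fb i + sc vq * Fb i * Kb i = F i * K i) \<and>
   (\<forall>i\<in>{2..n}.
      sc vq * Kb i * E (i - 1) - E (i - 1) * Kb i = - (Ki i * Eb (i - 1)) \<and>
      sc vq * Kb i * F (i - 1) - F (i - 1) * Kb i = K i * Fb (i - 1) \<and>
      sc vq * Kb i * Eb (i - 1) + Eb (i - 1) * Kb i = Ki i * E (i - 1) \<and>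
      sc vq * Kb i * Fb (i - 1) + Fb (i - 1) * Kb i = K i * F (i - 1)) \<and>
   (\<forall>i\<in>{1..n}. \<forall>j\<in>{1..n-1}. j \<noteq> i \<and> j + 1 \<noteq> i \<longrightarrow>
      Kb i * E j = E j * Kb i \<and> Kb i * F j = F j * Kb i \<and>
      Kb i * Eb j = - (Eb j * Kb i) \<and> Kb i * Fb j = - (Fb j * Kb i)) \<and>
   \<comment> \<open>QQ4\<close>
   (\<forall>i\<in>{1..n-1}. \<forall>j\<in>{1..n-1}.
      E i * F j - F j * E i =
        (if i = j then sc (1 / (vq - inverse vq)) * (K i * Ki (i + 1) - Ki i * K (i + 1)) else 0) \<and>
      Eb i * Fb j + Fb j * Eb i =
        (if i = j then sc (1 / (vq - inverse vq)) * (K i * K (i + 1) - Ki i * Ki (i + 1))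
                       + sc (vq - inverse vq) * Kb i * Kb (i + 1) else 0) \<and>
      E i * Fb j - Fb j * E i =
        (if i = j then Ki (i + 1) * Kb i - Kb (i + 1) * Ki i else 0) \<and>
      Eb i * F j - F j * Eb i =
        (if i = j then K (i + 1) * Kb i - Kb (i + 1) * K i else 0)) \<and>
   \<comment> \<open>QQ5\<close>
   (\<forall>i\<in>{1..n-1}.
      Eb i ^ 2 = - (sc ((vq - inverse vq) / (vq + inverse vq)) * E i ^ 2) \<and>
      Fb i ^ 2 = sc ((vq - inverse vq) / (vq + inverse vq)) * F i ^ 2) \<and>
   (\<forall>i\<in>{1..n-1}. \<forall>j\<in>{1..n-1}. i \<noteq> j + 1 \<and> j \<noteq> i + 1 \<longrightarrow>
      E i * Eb j = Eb j * E i \<and> F i * Fb j = Fb j * F i) \<and>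
   (\<forall>i\<in>{1..n-1}. \<forall>j\<in>{1..n-1}. i + 1 < j \<or> j + 1 < i \<longrightarrow>
      E i * E j = E j * E i \<and> F i * F j = F j * F i \<and>
      Eb i * Eb j = - (Eb j * Eb i) \<and> Fb i * Fb j = - (Fb j * Fb i)) \<and>
   (\<forall>i. 1 \<le> i \<and> i + 1 \<le> n - 1 \<longrightarrow>
      E i * E (i + 1) - sc vq * E (i + 1) * E i = Eb i * Eb (i + 1) + sc vq * Eb (i + 1) * Eb i \<and>
      E i * Eb (i + 1) - sc vq * Eb (i + 1) * E i = Eb i * E (i + 1) - sc vq * E (i + 1) * Eb i \<and>
      F i * F (i + 1) - sc vq * F (i + 1) * F i = - (Fb i * Fb (i + 1) + sc vq * Fb (i + 1) * Fb i) \<and>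
      F i * Fb (i + 1) - sc vq * Fb (i + 1) * F i = Fb i * F (i + 1) - sc vq * F (i + 1) * Fb i) \<and>
   \<comment> \<open>QQ6\<close>
   (\<forall>i\<in>{1..n-1}. \<forall>j\<in>{1..n-1}. i = j + 1 \<or> j = i + 1 \<longrightarrow>
      (\<forall>X\<in>{E j, Eb j}. E i ^ 2 * X - sc (vq + inverse vq) * E i * X * E i + X * E i ^ 2 = 0) \<and>
      (\<forall>Y\<in>{F j, Fb j}. F i ^ 2 * Y - sc (vq + inverse vq) * F i * Y * F i + Y * F i ^ 2 = 0))"

end

theory Submission
  imports Defs
begin

text \<open>
  Identities (1) and (2) come from one computation. Suppose x g - g x = P - Q, where
  P g = v^2 g P + v R, Q g = v^-2 g Q - v^-1 R and R g = g R. Then the commutators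
  D_k = x g^(k+1) - g^(k+1) x satisfy D_(k+1) = D_k g + g^(k+1) D_0, and solving this
  recursion gives D_k = v^k [k+1] g^k P - v^-k [k+1] g^k Q + [k+1][k] g^(k-1) R.
  Dividing by [k+1]! turns this into divided powers. For (1) take x = E_bar_i, g = F_i,
  P = K_bar_i K_(i+1), Q = K_i K_bar_(i+1) and R = - K_i K_(i+1) F_bar_i. For (2) the
  order of x and g is reversed: g = E_i, x = F_bar_i, P = K_bar_i K_(i+1)^-1,
  Q = K_bar_(i+1) K_i^-1 and R = E_bar_i K_(i+1)^-1 K_i^-1; the recursion for D_k is the same.

  For (3), (QQ5) gives E_bar_i E_(i+1) = v E_(i+1) E_bar_i + Y, where Y is the bracket in (3).
  The Serre relation (QQ6) with X = E_bar_i says exactly that Y E_(i+1) = v^-1 E_(i+1) Y,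
  so E_bar_i E_(i+1)^m = v^m E_(i+1)^m E_bar_i + [m] E_(i+1)^(m-1) Y.
\<close>

lemma vq_nonzero: "vq \<noteq> 0"
  by (simp add: vq_def Zero_fract_def eq_fract)

lemma vq_power_neq_1:
  assumes "k > 0"
  shows "vq ^ k \<noteq> 1"
proof
  assume "vq ^ k = 1"
  moreover have "vq ^ k = Fract ([:0, 1:] ^ k) 1"
    by (induct k) (simp_all add: vq_def One_fract_def)
  ultimately have "([:0, 1:] :: rat poly) ^ k = 1"
    by (simp add: One_fract_def eq_fract)
  then have "degree (([:0, 1:] :: rat poly) ^ k) = 0"
    by simp
  with assms show False
    by (simp add: degree_power_eq)
qed

lemma vq_power_neq_inverse_power:
  assumes "k > 0"
  shows "vq ^ k \<noteq> inverse vq ^ k"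
proof
  assume "vq ^ k = inverse vq ^ k"
  then have "vq ^ (2 * k) = inverse vq ^ k * vq ^ k"
    by (simp add: mult_2 power_add)
  also have "\<dots> = 1"
    using vq_nonzero by (simp flip: power_mult_distrib)
  finally show False
    using assms vq_power_neq_1[of "2 * k"] by simp
qed

lemma qint_Suc_nonzero: "qint (Suc k) \<noteq> 0"
  using vq_power_neq_inverse_power[of "Suc k"] vq_power_neq_inverse_power[of 1]
  by (simp add: qint_def)

lemma qfact_Suc: "qfact (Suc k) = qfact k * qint (Suc k)"
  by (simp add: qfact_def)

lemma qfact_nonzero: "qfact k \<noteq> 0"
  by (induct k) (simp_all add: qfact_Suc qint_Suc_nonzero, simp add: qfact_def)

lemma qint_0: "qint 0 = 0"
  by (simp add: qint_def)

lemma qint_Suc: "qint (Suc k) = vq * qint k + inverse vq ^ k"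
  using vq_power_neq_inverse_power[of 1] vq_nonzero
  by (simp add: qint_def field_simps)

lemma qint_Suc': "qint (Suc k) = inverse vq * qint k + vq ^ k"
  using vq_power_neq_inverse_power[of 1] vq_nonzero
  by (simp add: qint_def field_simps)

lemma qint_1: "qint (Suc 0) = 1"
  using qint_Suc[of 0] by (simp add: qint_0)

lemma qint_Suc_Suc: "qint (Suc (Suc k)) = vq ^ Suc k + inverse vq ^ Suc k + qint k"
  using vq_nonzero by (simp add: qint_Suc[of "Suc k"] qint_Suc'[of k] algebra_simps)

lemma commutator_power_Suc:
  fixes x y :: "'a::ring_1"
  shows "x * y ^ Suc (Suc k) - y ^ Suc (Suc k) * x
    = (x * y ^ Suc k - y ^ Suc k * x) * y + y ^ Suc k * (x * y - y * x)"
  by (simp only: power_Suc2) (simp add: algebra_simps)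

lemma mult_eq_imp_mult_assoc_eq:
  fixes a b c :: "'a::semigroup_mult"
  shows "a * b = c \<Longrightarrow> a * (b * z) = c * z"
  by (simp flip: mult.assoc)

lemma power_Suc_mult_assoc:
  fixes a :: "'a::monoid_mult"
  shows "a ^ k * (a * x) = a ^ Suc k * x"
  by (simp only: power_Suc2 mult.assoc)

locale qv_scalars =
  fixes sc :: "qv \<Rightarrow> 'a::ring_1"
  assumes qv_algebra: "qv_algebra sc"
begin

lemma sc_add: "sc (x + y) = sc x + sc y"
  and sc_mult: "sc (x * y) = sc x * sc y"
  and sc_1: "sc 1 = 1"
  and sc_central: "sc x * a = a * sc x"
  using qv_algebra unfolding qv_algebra_def by blast+

lemma sc_0: "sc 0 = 0"
  using sc_add[of 0 0] by simp

lemma sc_uminus: "sc (- x) = - sc x"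
  using minus_unique[of "sc x" "sc (- x)"] sc_add[of x "- x"] by (simp add: sc_0)

lemma sc_diff: "sc (x - y) = sc x - sc y"
  using sc_add[of x "- y"] by (simp add: sc_uminus)

definition scale :: "qv \<Rightarrow> 'a \<Rightarrow> 'a" where
  "scale c x = sc c * x"

lemma scale_mult_left: "scale c x * y = scale c (x * y)"
  and scale_scale: "scale c (scale d x) = scale (c * d) x"
  and scale_add_right: "scale c (x + y) = scale c x + scale c y"
  and scale_diff_right: "scale c (x - y) = scale c x - scale c y"
  and scale_minus_right: "scale c (- x) = - scale c x"
  and scale_add_left: "scale (c + d) x = scale c x + scale d x"
  and scale_diff_left: "scale (c - d) x = scale c x - scale d x"
  and scale_minus_left: "scale (- c) x = - scale c x"
  and scale_one: "scale 1 x = x"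
  and scale_zero_left: "scale 0 x = 0"
  and scale_zero_right: "scale c 0 = 0"
  unfolding scale_def
  by (simp_all add: mult.assoc sc_mult sc_add sc_diff sc_uminus sc_1 sc_0 algebra_simps
      flip: sc_central[of c x])

lemma scale_mult_right: "x * scale c y = scale c (x * y)"
  unfolding scale_def by (metis mult.assoc sc_central)

lemmas scale_simps = scale_mult_left scale_mult_right scale_scale scale_add_right
  scale_diff_right scale_minus_right scale_add_left scale_diff_left scale_minus_left
  scale_one scale_zero_left scale_zero_right

lemma dpow_eq_scale: "dpow sc x (int k) = scale (inverse (qfact k)) (x ^ k)"
  by (simp add: dpow_def scale_def)

lemma dpow_minus_one: "dpow sc x (int k - 1) = (if k = 0 then 0 else scale (inverse (qfact (k - 1))) (x ^ (k - 1)))"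
  by (simp add: dpow_def scale_def nat_diff_distrib')

lemma inverse_twisted_commute:
  assumes "k * k' = 1" "k' * k = 1" "k * x = scale c (x * k)" "c \<noteq> 0"
  shows "k' * x = scale (inverse c) (x * k')"
proof -
  have "x * k = scale (inverse c) (k * x)"
    using assms(3,4) by (simp add: scale_scale scale_one)
  then have "k' * (x * k) * k' = scale (inverse c) (k' * k * x * k')"
    by (simp add: scale_simps mult.assoc)
  then show ?thesis
    using assms(1,2) by (simp add: mult.assoc)
qed

lemma inverse_commute:
  fixes k k' x :: 'a
  assumes "k * k' = 1" "k' * k = 1" "k * x = x * k"
  shows "k' * x = x * k'"
  using inverse_twisted_commute[of k k' x 1] assms by (simp add: scale_one)

lemma commutator_sequence_closed_form:
  assumes D_0: "D 0 = P - Q"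
    and D_Suc: "\<And>k. D (Suc k) = D k * g + g ^ Suc k * D 0"
    and P: "P * g = scale (vq ^ 2) (g * P) + scale vq R"
    and Q: "Q * g = scale (inverse vq ^ 2) (g * Q) - scale (inverse vq) R"
    and R: "R * g = g * R"
  shows "D k = scale (vq ^ k * qint (Suc k)) (g ^ k * P)
    - scale (inverse vq ^ k * qint (Suc k)) (g ^ k * Q)
    + scale (qint (Suc k) * qint k) (g ^ (k - 1) * R)"
proof (induction k)
  case 0
  then show ?case
    using D_0 by (simp add: qint_0 qint_1 scale_simps)
next
  case (Suc k)
  have R_shift: "scale (qint (Suc k) * qint k) (g ^ (k - 1) * R * g) = scale (qint (Suc k) * qint k) (g ^ k * R)"
  proof (cases k)
    case 0
    then show ?thesis by (simp add: qint_0 scale_simps)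
  next
    case (Suc l)
    then show ?thesis by (metis R diff_Suc_1 mult.assoc power_Suc2)
  qed
  have "D (Suc k) = scale (vq ^ k * qint (Suc k)) (g ^ k * (P * g))
      - scale (inverse vq ^ k * qint (Suc k)) (g ^ k * (Q * g))
      + scale (qint (Suc k) * qint k) (g ^ (k - 1) * R * g) + g ^ Suc k * P - g ^ Suc k * Q"
    by (simp add: D_Suc Suc.IH D_0 scale_simps algebra_simps)
  also have "\<dots> = scale (1 + vq ^ 2 * (vq ^ k * qint (Suc k))) (g ^ Suc k * P)
      - scale (1 + inverse vq ^ 2 * (inverse vq ^ k * qint (Suc k))) (g ^ Suc k * Q)
      + scale (vq * (vq ^ k * qint (Suc k)) + inverse vq * (inverse vq ^ k * qint (Suc k))
          + qint (Suc k) * qint k) (g ^ k * R)"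
    unfolding P Q R_shift by (simp add: scale_simps algebra_simps power_Suc_mult_assoc)
  also have "\<dots> = scale (vq ^ Suc k * qint (Suc (Suc k))) (g ^ Suc k * P)
      - scale (inverse vq ^ Suc k * qint (Suc (Suc k))) (g ^ Suc k * Q)
      + scale (qint (Suc (Suc k)) * qint (Suc k)) (g ^ (Suc k - 1) * R)"
  proof -
    have "1 + vq ^ 2 * (vq ^ k * qint (Suc k)) = vq ^ Suc k * qint (Suc (Suc k))"
      using vq_nonzero by (simp add: qint_Suc[of "Suc k"] field_simps power_inverse power2_eq_square)
    moreover have "1 + inverse vq ^ 2 * (inverse vq ^ k * qint (Suc k))
        = inverse vq ^ Suc k * qint (Suc (Suc k))"
      using vq_nonzero by (simp add: qint_Suc'[of "Suc k"] field_simps power_inverse power2_eq_square)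
    moreover have "vq * (vq ^ k * qint (Suc k)) + inverse vq * (inverse vq ^ k * qint (Suc k))
        + qint (Suc k) * qint k = qint (Suc (Suc k)) * qint (Suc k)"
      by (simp add: qint_Suc_Suc algebra_simps)
    ultimately show ?thesis
      by simp
  qed
  finally show ?case .
qed

lemma twisted_commute_power:
  assumes x: "x * g = scale vq (g * x) + y"
    and y: "y * g = scale (inverse vq) (g * y)"
  shows "x * g ^ Suc k = scale (vq ^ Suc k) (g ^ Suc k * x) + scale (qint (Suc k)) (g ^ k * y)"
proof (induction k)
  case 0
  then show ?case
    using x by (simp add: qint_1 scale_simps)
next
  case (Suc k)
  have "x * g ^ Suc (Suc k) = (x * g ^ Suc k) * g"
    by (simp only: power_Suc2 mult.assoc)
  also have "\<dots> = scale (vq ^ Suc k) (g ^ Suc k * (x * g)) + scale (qint (Suc k)) (g ^ k * (y * g))"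
    unfolding Suc.IH by (simp add: scale_simps distrib_right mult.assoc)
  also have "\<dots> = scale (vq ^ Suc (Suc k)) (g ^ Suc (Suc k) * x)
      + scale (vq ^ Suc k + inverse vq * qint (Suc k)) (g ^ Suc k * y)"
    unfolding x y by (simp add: scale_simps algebra_simps power_Suc_mult_assoc)
  also have "\<dots> = scale (vq ^ Suc (Suc k)) (g ^ Suc (Suc k) * x) + scale (qint (Suc (Suc k))) (g ^ Suc k * y)"
    by (simp add: qint_Suc'[of "Suc k"] add.commute)
  finally show ?case .
qed

lemma inverse_qfact_Suc_mult_qint: "inverse (qfact (Suc k)) * qint (Suc k) = inverse (qfact k)"
  using qint_Suc_nonzero[of k] qfact_nonzero[of k] by (simp add: qfact_Suc)

lemma commutator_sequence_divided:
  assumes "D 0 = P - Q"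
    and "\<And>k. D (Suc k) = D k * g + g ^ Suc k * D 0"
    and "P * g = scale (vq ^ 2) (g * P) + scale vq R"
    and "Q * g = scale (inverse vq ^ 2) (g * Q) - scale (inverse vq) R"
    and "R * g = g * R"
  shows "scale (inverse (qfact (Suc k))) (D k)
    = scale (vq ^ k) (dpow sc g (int k) * P) - scale (inverse vq ^ k) (dpow sc g (int k) * Q)
      + dpow sc g (int k - 1) * R"
proof (cases "k = 0")
  case True
  then show ?thesis
    using commutator_sequence_closed_form[OF assms, of 0]
    by (simp add: dpow_def scale_def sc_0 sc_1 qint_0 qint_1 qfact_def)
next
  case False
  have "inverse (qfact (Suc k)) * (vq ^ k * qint (Suc k)) = vq ^ k * inverse (qfact k)"
    and "inverse (qfact (Suc k)) * (inverse vq ^ k * qint (Suc k)) = inverse vq ^ k * inverse (qfact k)"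
    by (metis inverse_qfact_Suc_mult_qint mult.left_commute)+
  moreover have "inverse (qfact (Suc k)) * (qint (Suc k) * qint k) = inverse (qfact (k - 1))"
    using False inverse_qfact_Suc_mult_qint[of k] inverse_qfact_Suc_mult_qint[of "k - 1"]
    by (simp flip: mult.assoc)
  ultimately have "scale (inverse (qfact (Suc k))) (D k)
      = scale (vq ^ k * inverse (qfact k)) (g ^ k * P) - scale (inverse vq ^ k * inverse (qfact k)) (g ^ k * Q)
        + scale (inverse (qfact (k - 1))) (g ^ (k - 1) * R)"
    using commutator_sequence_closed_form[OF assms, of k]
    by (simp only: scale_add_right scale_diff_right scale_scale)
  with False show ?thesis
    by (simp add: dpow_eq_scale dpow_minus_one scale_simps)
qed

lemma twisted_commute_dpow:
  assumes "x * g = scale vq (g * x) + y"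
    and "y * g = scale (inverse vq) (g * y)"
  shows "x * dpow sc g (int (Suc k)) = scale (vq ^ Suc k) (dpow sc g (int (Suc k)) * x) + dpow sc g (int k) * y"
  using twisted_commute_power[OF assms, of k]
  by (simp add: dpow_eq_scale scale_simps mult.commute[of "inverse (qfact (Suc k))"]
      inverse_qfact_Suc_mult_qint del: of_nat_Suc)

end

text \<open>The relations below are stated at Suc i, the simp normal form of i + 1, so that they
  still match as rewrite rules after simplification.\<close>

locale qq_relations = qv_scalars sc for sc :: "qv \<Rightarrow> 'a::ring_1" +
  fixes n i :: nat
    and K Ki Kb E F Eb Fb :: "nat \<Rightarrow> 'a"
  assumes relations: "qq_rels n sc K Ki Kb E F Eb Fb"
    and index: "1 \<le> i" "i \<le> n - 1"
begin

lemma index_ranges: "i \<in> {1..n - 1}" "Suc i \<in> {2..n}"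
  using index by auto

lemma K_inverse:
  "K i * Ki i = 1" "Ki i * K i = 1" "K (Suc i) * Ki (Suc i) = 1" "Ki (Suc i) * K (Suc i) = 1"
  using relations index unfolding qq_rels_def by auto

lemma K_commute:
  "K i * K (Suc i) = K (Suc i) * K i"
  "K (Suc i) * Kb i = Kb i * K (Suc i)"
  "K i * Kb (Suc i) = Kb (Suc i) * K i"
  using relations index unfolding qq_rels_def by auto

lemma K_E:
  "K i * E i = scale vq (E i * K i)" "K (Suc i) * E i = scale (inverse vq) (E i * K (Suc i))"
  and K_Eb: "K (Suc i) * Eb i = scale (inverse vq) (Eb i * K (Suc i))"
  and K_F:
  "K i * F i = scale (inverse vq) (F i * K i)" "K (Suc i) * F i = scale vq (F i * K (Suc i))"
  and K_Fb:
  "K i * Fb i = scale (inverse vq) (Fb i * K i)" "K (Suc i) * Fb i = scale vq (Fb i * K (Suc i))"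
  using relations index unfolding qq_rels_def scale_def
  by (auto simp: epal_def mult.assoc power_int_minus)

lemma Kb_F: "Kb i * F i = scale vq (F i * Kb i) - Fb i * K i"
  and Kb_E: "Kb i * E i = scale vq (E i * Kb i) + Eb i * Ki i"
proof -
  have "Kb i * F i - sc vq * F i * Kb i = - (Fb i * K i)"
    and "Kb i * E i - sc vq * E i * Kb i = Eb i * Ki i"
    using relations index_ranges unfolding qq_rels_def by auto
  then show "Kb i * F i = scale vq (F i * Kb i) - Fb i * K i"
    and "Kb i * E i = scale vq (E i * Kb i) + Eb i * Ki i"
    by (simp_all add: scale_def mult.assoc algebra_simps)
qed

lemma Kb_Suc_F: "Kb (Suc i) * F i = scale (inverse vq) (F i * Kb (Suc i) + K (Suc i) * Fb i)"
  and Kb_Suc_E: "Kb (Suc i) * E i = scale (inverse vq) (E i * Kb (Suc i) - Ki (Suc i) * Eb i)"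
proof -
  have QQ3: "\<forall>j\<in>{2..n}. sc vq * Kb j * F (j - 1) - F (j - 1) * Kb j = K j * Fb (j - 1)
      \<and> sc vq * Kb j * E (j - 1) - E (j - 1) * Kb j = - (Ki j * Eb (j - 1))"
    using relations unfolding qq_rels_def by auto
  have "sc vq * Kb (Suc i) * F i - F i * Kb (Suc i) = K (Suc i) * Fb i"
    and "sc vq * Kb (Suc i) * E i - E i * Kb (Suc i) = - (Ki (Suc i) * Eb i)"
    using bspec[OF QQ3 index_ranges(2)] by simp_all
  then have "scale vq (Kb (Suc i) * F i) = F i * Kb (Suc i) + K (Suc i) * Fb i"
    and "scale vq (Kb (Suc i) * E i) = E i * Kb (Suc i) - Ki (Suc i) * Eb i"
    by (simp_all add: scale_def mult.assoc algebra_simps)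
  then show "Kb (Suc i) * F i = scale (inverse vq) (F i * Kb (Suc i) + K (Suc i) * Fb i)"
    and "Kb (Suc i) * E i = scale (inverse vq) (E i * Kb (Suc i) - Ki (Suc i) * Eb i)"
    using vq_nonzero by (auto simp: scale_scale scale_one dest: arg_cong[where f = "scale (inverse vq)"])
qed

lemma Eb_F_commutator: "Eb i * F i - F i * Eb i = Kb i * K (Suc i) - K i * Kb (Suc i)"
  and E_Fb_commutator: "E i * Fb i - Fb i * E i = Ki (Suc i) * Kb i - Kb (Suc i) * Ki i"
  using relations index_ranges K_commute unfolding qq_rels_def by auto

lemma E_Eb_commute: "E i * Eb i = Eb i * E i"
  and F_Fb_commute: "F i * Fb i = Fb i * F i"
  using relations index_ranges unfolding qq_rels_def by auto

lemma E_Eb_Suc: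
  assumes "i \<le> n - 2"
  shows "E i * Eb (Suc i) - sc vq * Eb (Suc i) * E i = Eb i * E (Suc i) - sc vq * E (Suc i) * Eb i"
proof -
  have "\<forall>a. 1 \<le> a \<and> a + 1 \<le> n - 1 \<longrightarrow>
      E a * Eb (a + 1) - sc vq * Eb (a + 1) * E a = Eb a * E (a + 1) - sc vq * E (a + 1) * Eb a"
    using relations unfolding qq_rels_def by auto
  moreover have "1 \<le> i \<and> i + 1 \<le> n - 1"
    using index assms by auto
  ultimately show ?thesis
    by simp
qed

lemma Serre_E_Suc_Eb:
  assumes "i \<le> n - 2"
  shows "E (Suc i) ^ 2 * Eb i - sc (vq + inverse vq) * E (Suc i) * Eb i * E (Suc i) + Eb i * E (Suc i) ^ 2 = 0"
proof -
  have QQ6: "\<forall>a\<in>{1..n - 1}. \<forall>b\<in>{1..n - 1}. a = b + 1 \<longrightarrow>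
      E a ^ 2 * Eb b - sc (vq + inverse vq) * E a * Eb b * E a + Eb b * E a ^ 2 = 0"
    using relations unfolding qq_rels_def by auto
  have "Suc i \<in> {1..n - 1}"
    using index assms by auto
  from bspec[OF bspec[OF QQ6 this] index_ranges(1)] show ?thesis
    by simp
qed

lemma Ki_E: "Ki i * E i = scale (inverse vq) (E i * Ki i)" "Ki (Suc i) * E i = scale vq (E i * Ki (Suc i))"
  and Ki_Eb: "Ki (Suc i) * Eb i = scale vq (Eb i * Ki (Suc i))"
  using inverse_twisted_commute[OF K_inverse(1,2) K_E(1)] inverse_twisted_commute[OF K_inverse(3,4) K_E(2)]
    inverse_twisted_commute[OF K_inverse(3,4) K_Eb] vq_nonzero
  by simp_all

lemma Ki_commute:
  "Ki (Suc i) * Kb i = Kb i * Ki (Suc i)"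
  "Ki i * Ki (Suc i) = Ki (Suc i) * Ki i"
proof -
  show "Ki (Suc i) * Kb i = Kb i * Ki (Suc i)"
    using inverse_commute[OF K_inverse(3,4) K_commute(2)] .
  have "Ki i * K (Suc i) = K (Suc i) * Ki i"
    using inverse_commute[OF K_inverse(1,2) K_commute(1)] .
  then show "Ki i * Ki (Suc i) = Ki (Suc i) * Ki i"
    using inverse_commute[OF K_inverse(3,4), of "Ki i"] by simp
qed

lemma K_K_Fb: "K i * (K (Suc i) * Fb i) = Fb i * (K i * K (Suc i))"
  using vq_nonzero
  by (simp add: K_Fb(2) K_Fb(1)[THEN mult_eq_imp_mult_assoc_eq] scale_simps mult.assoc)

lemma Kb_K_F: "Kb i * K (Suc i) * F i
    = scale (vq ^ 2) (F i * (Kb i * K (Suc i))) + scale vq (- (K i * K (Suc i) * Fb i))"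
  by (simp add: mult.assoc K_F(2) Kb_F[THEN mult_eq_imp_mult_assoc_eq] K_K_Fb scale_simps power2_eq_square
      left_diff_distrib)

lemma K_Kb_F: "K i * Kb (Suc i) * F i
    = scale (inverse vq ^ 2) (F i * (K i * Kb (Suc i))) - scale (inverse vq) (- (K i * K (Suc i) * Fb i))"
  by (simp add: mult.assoc Kb_Suc_F K_F(1)[THEN mult_eq_imp_mult_assoc_eq] K_K_Fb scale_simps
      power2_eq_square distrib_left)

lemma K_K_Fb_F: "- (K i * K (Suc i) * Fb i) * F i = F i * - (K i * K (Suc i) * Fb i)"
  using vq_nonzero
  by (simp add: mult.assoc F_Fb_commute[symmetric]
      K_F(2)[THEN mult_eq_imp_mult_assoc_eq] K_F(1)[THEN mult_eq_imp_mult_assoc_eq] scale_simps)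

lemma Eb_F_dpow:
  assumes "m \<ge> 1"
  shows "Eb i * dpow sc (F i) (int m)
       = dpow sc (F i) (int m) * Eb i
         - sc (vq powi (1 - int m)) * dpow sc (F i) (int m - 1) * K i * Kb (i + 1)
         + sc (vq powi (int m - 1)) * dpow sc (F i) (int m - 1) * Kb i * K (i + 1)
         - dpow sc (F i) (int m - 2) * K i * K (i + 1) * Fb i"
proof -
  obtain k where m: "m = Suc k"
    using assms by (cases m) auto
  then have exponents: "int m - 1 = int k" "int m - 2 = int k - 1" "1 - int m = - int k"
    by simp_all
  define D where "D k = Eb i * F i ^ Suc k - F i ^ Suc k * Eb i" for k
  have "scale (inverse (qfact (Suc k))) (D k)
      = scale (vq ^ k) (dpow sc (F i) (int k) * (Kb i * K (Suc i)))
        - scale (inverse vq ^ k) (dpow sc (F i) (int k) * (K i * Kb (Suc i)))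
        + dpow sc (F i) (int k - 1) * - (K i * K (Suc i) * Fb i)"
  proof (rule commutator_sequence_divided)
    show "D 0 = Kb i * K (Suc i) - K i * Kb (Suc i)"
      using Eb_F_commutator by (simp add: D_def)
    show "D (Suc k) = D k * F i + F i ^ Suc k * D 0" for k
      unfolding D_def power_Suc0_right by (rule commutator_power_Suc)
  qed (fact Kb_K_F K_Kb_F K_K_Fb_F)+
  moreover have "Eb i * dpow sc (F i) (int m) = dpow sc (F i) (int m) * Eb i + scale (inverse (qfact (Suc k))) (D k)"
    by (simp add: D_def m dpow_eq_scale scale_simps del: of_nat_Suc)
  ultimately show ?thesis
    unfolding exponents by (simp add: scale_def power_int_minus power_inverse mult.assoc)
qed

lemma Kb_Ki_E: "Kb i * Ki (Suc i) * E i
    = scale (vq ^ 2) (E i * (Kb i * Ki (Suc i))) + scale vq (Eb i * Ki (Suc i) * Ki i)"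
  by (simp add: mult.assoc Ki_E(2) Kb_E[THEN mult_eq_imp_mult_assoc_eq] Ki_commute(2) scale_simps
      power2_eq_square distrib_right)

lemma Kb_Ki_Suc_E: "Kb (Suc i) * Ki i * E i
    = scale (inverse vq ^ 2) (E i * (Kb (Suc i) * Ki i)) - scale (inverse vq) (Eb i * Ki (Suc i) * Ki i)"
  using vq_nonzero
  by (simp add: mult.assoc Ki_E(1) Kb_Suc_E[THEN mult_eq_imp_mult_assoc_eq]
      Ki_Eb[THEN mult_eq_imp_mult_assoc_eq] scale_simps power2_eq_square left_diff_distrib)

lemma Eb_Ki_Ki_E: "Eb i * Ki (Suc i) * Ki i * E i = E i * (Eb i * Ki (Suc i) * Ki i)"
  using vq_nonzero
  by (simp add: mult.assoc Ki_E(1) Ki_E(2)[THEN mult_eq_imp_mult_assoc_eq]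
      E_Eb_commute[symmetric] E_Eb_commute[symmetric, THEN mult_eq_imp_mult_assoc_eq] scale_simps)

lemma E_dpow_Fb:
  assumes "m \<ge> 1"
  shows "dpow sc (E i) (int m) * Fb i
       = Fb i * dpow sc (E i) (int m)
         + sc (vq powi (int m - 1)) * dpow sc (E i) (int m - 1) * Kb i * Ki (i + 1)
         - sc (vq powi (- int m + 1)) * dpow sc (E i) (int m - 1) * Kb (i + 1) * Ki i
         + dpow sc (E i) (int m - 2) * Eb i * Ki (i + 1) * Ki i"
proof -
  obtain k where m: "m = Suc k"
    using assms by (cases m) auto
  then have exponents: "int m - 1 = int k" "int m - 2 = int k - 1" "- int m + 1 = - int k"
    by simp_all
  define D where "D k = E i ^ Suc k * Fb i - Fb i * E i ^ Suc k" for k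
  have "scale (inverse (qfact (Suc k))) (D k)
      = scale (vq ^ k) (dpow sc (E i) (int k) * (Kb i * Ki (Suc i)))
        - scale (inverse vq ^ k) (dpow sc (E i) (int k) * (Kb (Suc i) * Ki i))
        + dpow sc (E i) (int k - 1) * (Eb i * Ki (Suc i) * Ki i)"
  proof (rule commutator_sequence_divided)
    show "D 0 = Kb i * Ki (Suc i) - Kb (Suc i) * Ki i"
      using E_Fb_commutator Ki_commute(1) by (simp add: D_def)
    show "D (Suc k) = D k * E i + E i ^ Suc k * D 0" for k
      using commutator_power_Suc[of "Fb i" "E i" k] unfolding D_def power_Suc0_right
      by (simp add: algebra_simps)
  qed (fact Kb_Ki_E Kb_Ki_Suc_E Eb_Ki_Ki_E)+
  moreover have "dpow sc (E i) (int m) * Fb i = Fb i * dpow sc (E i) (int m) + scale (inverse (qfact (Suc k))) (D k)"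
    by (simp add: D_def m dpow_eq_scale scale_simps del: of_nat_Suc)
  ultimately show ?thesis
    unfolding exponents by (simp add: scale_def power_int_minus power_inverse mult.assoc)
qed

lemma Eb_E_Suc_dpow:
  assumes "i \<le> n - 2" "m \<ge> 1"
  shows "Eb i * dpow sc (E (i + 1)) (int m)
       = sc (vq ^ m) * dpow sc (E (i + 1)) (int m) * Eb i
         + dpow sc (E (i + 1)) (int m - 1) * (E i * Eb (i + 1) - sc vq * Eb (i + 1) * E i)"
proof -
  obtain k where m: "m = Suc k"
    using assms(2) by (cases m) auto
  then have exponent: "int m - 1 = int k"
    by simp
  define Y where "Y = Eb i * E (Suc i) - scale vq (E (Suc i) * Eb i)"
  have "Eb i * E (Suc i) = scale vq (E (Suc i) * Eb i) + Y"
    by (simp add: Y_def)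
  moreover have "Y * E (Suc i) = scale (inverse vq) (E (Suc i) * Y)"
  proof -
    have "Y * E (Suc i) - scale (inverse vq) (E (Suc i) * Y)
        = E (Suc i) ^ 2 * Eb i - sc (vq + inverse vq) * E (Suc i) * Eb i * E (Suc i) + Eb i * E (Suc i) ^ 2"
      using vq_nonzero
      by (simp add: Y_def power2_eq_square mult.assoc scale_simps algebra_simps flip: scale_def)
    then show ?thesis
      using Serre_E_Suc_Eb[OF assms(1)] by simp
  qed
  ultimately have "Eb i * dpow sc (E (Suc i)) (int (Suc k))
      = scale (vq ^ Suc k) (dpow sc (E (Suc i)) (int (Suc k)) * Eb i) + dpow sc (E (Suc i)) (int k) * Y"
    by (rule twisted_commute_dpow)
  then show ?thesis
    unfolding exponent using E_Eb_Suc[OF assms(1)] by (simp add: m Y_def scale_def mult.assoc del: of_nat_Suc)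
qed

end

theorem lemma5p1:
  fixes n i m :: nat
    and sc :: "qv \<Rightarrow> 'a::ring_1"
    and K Ki Kb E F Eb Fb :: "nat \<Rightarrow> 'a"
  assumes alg: "qv_algebra sc"
    and rels: "qq_rels n sc K Ki Kb E F Eb Fb"
    and i: "1 \<le> i" "i \<le> n - 1"
    and m: "m \<ge> 1"
  shows
    "(Eb i * dpow sc (F i) (int m)
       = dpow sc (F i) (int m) * Eb i
         - sc (vq powi (1 - int m)) * dpow sc (F i) (int m - 1) * K i * Kb (i + 1)
         + sc (vq powi (int m - 1)) * dpow sc (F i) (int m - 1) * Kb i * K (i + 1)
         - dpow sc (F i) (int m - 2) * K i * K (i + 1) * Fb i)
    \<and> (dpow sc (E i) (int m) * Fb i
       = Fb i * dpow sc (E i) (int m)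
         + sc (vq powi (int m - 1)) * dpow sc (E i) (int m - 1) * Kb i * Ki (i + 1)
         - sc (vq powi (- int m + 1)) * dpow sc (E i) (int m - 1) * Kb (i + 1) * Ki i
         + dpow sc (E i) (int m - 2) * Eb i * Ki (i + 1) * Ki i)
    \<and> (i \<le> n - 2 \<longrightarrow>
     Eb i * dpow sc (E (i + 1)) (int m)
       = sc (vq ^ m) * dpow sc (E (i + 1)) (int m) * Eb i
         + dpow sc (E (i + 1)) (int m - 1) * (E i * Eb (i + 1) - sc vq * Eb (i + 1) * E i))"
proof -
  interpret qq_relations sc n i K Ki Kb E F Eb Fb
    using alg rels i by unfold_locales
  show ?thesis
    using Eb_F_dpow[OF m] E_dpow_Fb[OF m] Eb_E_Suc_dpow[OF _ m] by blast
qed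

end
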